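(* Let $\alpha,\beta$ be positive integers and let $\mathcal{C}\subseteq\mathbb{F}_q^\alpha\times\mathcal{R}^\beta$ be an $\mathbb{F}_q\mathcal{R}$-skew cyclic code of length $(\alpha,\beta)$. Suppose that the order $|\langle\theta\rangle|$ of $\theta$ divides $\beta$. Then the dual code $\mathcal{C}^\perp$ is also an $\mathbb{F}_q\mathcal{R}$-skew cyclic code of length $(\alpha,\beta)$.
   Context: Let $p$ be a prime, $q=p^m$, $\mathbb{F}_q$ the finite field with $q$ elements, and $\mathcal{R}=\mathbb{F}_q[u]/\langle u^2-u\rangle=\mathbb{F}_q+u\mathbb{F}_q$ (so $u^2=u$). Fix an integer $i$ and let $\Theta$ be the automorphism of $\mathbb{F}_q$ given by $\Theta(a)=a^{p^i}$, and $\theta$ the automorphism of $\mathcal{R}$ given by $\theta(a+ub)=a^{p^i}+ub^{p^i}$ ($a,b\in\mathbb{F}_q$). Let $\eta:\mathcal{R}\to\mathbb{F}_q$, $\eta(a+ub)=a$. The set $\mathbb{F}_q^\alpha\times\mathcal{R}^\beta$ is an $\mathcal{R}$-module under $s*(x_0,\dots,x_{\alpha-1},y_0,\dots,y_{\beta-1})=(\eta(s)x_0,\dots,\eta(s)x_{\alpha-1},sy_0,\dots,sy_{\beta-1})$. An $\mathbb{F}_q\mathcal{R}$-skew cyclic code of length $(\alpha,\beta)$ is an $\mathcal{R}$-submodule $\mathcal{C}$ of $\mathbb{F}_q^\alpha\times\mathcal{R}^\beta$ such that for every $c=(x_0,\dots,x_{\alpha-1},y_0,\dots,y_{\beta-1})\in\mathcal{C}$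 also $\sigma(c)=(\Theta(x_{\alpha-1}),\Theta(x_0),\dots,\Theta(x_{\alpha-2}),\theta(y_{\beta-1}),\theta(y_0),\dots,\theta(y_{\beta-2}))\in\mathcal{C}$. For $l=(x_0,\dots,x_{\alpha-1},y_0,\dots,y_{\beta-1})$ and $l'=(x'_0,\dots,x'_{\alpha-1},y'_0,\dots,y'_{\beta-1})$ in $\mathbb{F}_q^\alpha\times\mathcal{R}^\beta$ the inner product is $l\cdot l'=u\sum_{i=0}^{\alpha-1}x_ix'_i+\sum_{j=0}^{\beta-1}y_jy'_j\in\mathcal{R}$, and $\mathcal{C}^\perp=\{l'\in\mathbb{F}_q^\alpha\times\mathcal{R}^\beta : l\cdot l'=0 \text{ for all } l\in\mathcal{C}\}$. *)

theory Defs
  imports Main "HOL-Computational_Algebra.Primes"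
begin

text \<open>The ring R = F_q + u F_q (u^2 = u) is represented by pairs (a,b) standing for a + u b.\<close>

definition R_add :: "'a::field \<times> 'a \<Rightarrow> 'a \<times> 'a \<Rightarrow> 'a \<times> 'a" where
  "R_add r s = (fst r + fst s, snd r + snd s)"

definition R_mult :: "'a::field \<times> 'a \<Rightarrow> 'a \<times> 'a \<Rightarrow> 'a \<times> 'a" where
  "R_mult r s = (fst r * fst s, fst r * snd s + snd r * fst s + snd r * snd s)"

definition R_zero :: "'a::field \<times> 'a" where
  "R_zero = (0, 0)"

definition R_u :: "'a::field \<times> 'a" where
  "R_u = (0, 1)"

definition R_sum :: "('a::field \<times> 'a) list \<Rightarrow> 'a \<times> 'a" where
  "R_sum rs = foldr R_add rs R_zero"

definition eta :: "'a::field \<times> 'a \<Rightarrow> 'a" where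
  "eta r = fst r"

definition Theta :: "nat \<Rightarrow> nat \<Rightarrow> 'a::field \<Rightarrow> 'a" where
  "Theta p i a = a ^ (p ^ i)"

definition theta :: "nat \<Rightarrow> nat \<Rightarrow> 'a::field \<times> 'a \<Rightarrow> 'a \<times> 'a" where
  "theta p i r = (fst r ^ (p ^ i), snd r ^ (p ^ i))"

definition theta_order :: "nat \<Rightarrow> nat \<Rightarrow> 'a::field itself \<Rightarrow> nat" where
  "theta_order p i _ = (LEAST k. 0 < k \<and> (\<forall>r::'a \<times> 'a. (theta p i ^^ k) r = r))"

text \<open>Elements of F_q^alpha x R^beta: pairs of lists of lengths alpha and beta.\<close>
type_synonym 'a word = "'a list \<times> ('a \<times> 'a) list"

definition ambient :: "nat \<Rightarrow> nat \<Rightarrow> ('a::field) word set" where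
  "ambient \<alpha> \<beta> = {(x, y). length x = \<alpha> \<and> length y = \<beta>}"

definition word_add :: "('a::field) word \<Rightarrow> 'a word \<Rightarrow> 'a word" where
  "word_add c d = (map2 (+) (fst c) (fst d), map2 R_add (snd c) (snd d))"

definition word_zero :: "nat \<Rightarrow> nat \<Rightarrow> ('a::field) word" where
  "word_zero \<alpha> \<beta> = (replicate \<alpha> 0, replicate \<beta> R_zero)"

definition smult_word :: "'a::field \<times> 'a \<Rightarrow> 'a word \<Rightarrow> 'a word" where
  "smult_word s c = (map (\<lambda>x. eta s * x) (fst c), map (R_mult s) (snd c))"

definition is_R_submodule :: "nat \<Rightarrow> nat \<Rightarrow> ('a::field) word set \<Rightarrow> bool" where
  "is_R_submodule \<alpha> \<beta> C \<longleftrightarrow>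
     C \<subseteq> ambient \<alpha> \<beta> \<and> word_zero \<alpha> \<beta> \<in> C \<and>
     (\<forall>c\<in>C. \<forall>d\<in>C. word_add c d \<in> C) \<and>
     (\<forall>s. \<forall>c\<in>C. smult_word s c \<in> C)"

definition cshift :: "'b list \<Rightarrow> 'b list" where
  "cshift xs = (if xs = [] then [] else last xs # butlast xs)"

definition sigma :: "nat \<Rightarrow> nat \<Rightarrow> ('a::field) word \<Rightarrow> 'a word" where
  "sigma p i c = (map (Theta p i) (cshift (fst c)), map (theta p i) (cshift (snd c)))"

definition is_skew_cyclic :: "nat \<Rightarrow> nat \<Rightarrow> nat \<Rightarrow> nat \<Rightarrow> ('a::field) word set \<Rightarrow> bool" where
  "is_skew_cyclic p i \<alpha> \<beta> C \<longleftrightarrow>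
     is_R_submodule \<alpha> \<beta> C \<and> (\<forall>c\<in>C. sigma p i c \<in> C)"

definition inner :: "('a::field) word \<Rightarrow> 'a word \<Rightarrow> 'a \<times> 'a" where
  "inner l l' = R_add (R_mult R_u (sum_list (map2 (*) (fst l) (fst l')), 0))
                      (R_sum (map2 R_mult (snd l) (snd l')))"

definition dual :: "nat \<Rightarrow> nat \<Rightarrow> ('a::field) word set \<Rightarrow> 'a word set" where
  "dual \<alpha> \<beta> C = {l' \<in> ambient \<alpha> \<beta>. \<forall>l\<in>C. inner l l' = R_zero}"

end

theory Submission
  imports Defs "HOL-Number_Theory.Residues"
begin

text \<open>In characteristic \<open>p\<close> the map \<open>x \<mapsto> x\<^bsup>p^i\<^esup>\<close> is an injective ring endomorphism, and
  the cyclic shift merely permutes the summands of the inner product; hence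
  \<open>\<sigma> l \<cdot> \<sigma> l' = \<theta> (l \<cdot> l')\<close>. Being injective, \<open>\<sigma>\<close> permutes the finite
  \<open>\<sigma>\<close>-invariant code \<open>C\<close>, so for \<open>c \<in> C\<^sup>\<perp>\<close> and \<open>l = \<sigma> l\<^sub>0 \<in> C\<close> we get
  \<open>l \<cdot> \<sigma> c = \<theta> (l\<^sub>0 \<cdot> c) = 0\<close>.\<close>

lemma CHAR_eq_prime_if_card_eq_power:
  assumes "prime p" and "card (UNIV :: 'a::{finite,field} set) = p ^ m"
  shows "CHAR('a) = p"
proof -
  have "prime CHAR('a)"
    by (rule prime_CHAR_semidom) (simp add: finite_imp_CHAR_pos)
  moreover have "CHAR('a) dvd p ^ m"
    using CHAR_dvd_CARD[where 'a='a] assms(2) by simp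
  ultimately show ?thesis
    using assms(1) prime_dvd_power primes_dvd_imp_eq by blast
qed

lemma Theta_add:
  assumes "prime CHAR('a)" and "p = CHAR('a)"
  shows "Theta p i (x + y :: 'a::field) = Theta p i x + Theta p i y"
  using freshmans_dream'[OF assms(1)] assms(2) by (simp add: Theta_def)

lemma Theta_mult: "Theta p i (x * y) = Theta p i x * Theta p i y"
  by (simp add: Theta_def power_mult_distrib)

lemma Theta_zero: "0 < p \<Longrightarrow> Theta p i 0 = 0"
  by (simp add: Theta_def)

lemma Theta_sum_list:
  assumes "prime CHAR('a)" and "p = CHAR('a)"
  shows "Theta p i (sum_list (xs :: 'a::field list)) = sum_list (map (Theta p i) xs)"
  using assms by (induction xs) (simp_all add: Theta_zero Theta_add prime_gt_0_nat)

lemma inj_Theta: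
  assumes "prime CHAR('a)" and "p = CHAR('a)"
  shows "inj (Theta p i :: 'a::field \<Rightarrow> 'a)"
proof (rule injI)
  fix x y :: 'a
  assume "Theta p i x = Theta p i y"
  then have "Theta p i (x - y) = 0"
    using Theta_add[OF assms, where x = "x - y" and y = y] by simp
  then show "x = y"
    by (simp add: Theta_def)
qed

lemma theta_eq_Theta: "theta p i r = (Theta p i (fst r), Theta p i (snd r))"
  by (simp add: theta_def Theta_def)

lemma theta_R_add:
  assumes "prime CHAR('a)" and "p = CHAR('a)"
  shows "theta p i (R_add r s :: 'a::field \<times> 'a) = R_add (theta p i r) (theta p i s)"
  by (simp add: theta_eq_Theta R_add_def Theta_add[OF assms])

lemma theta_R_mult:
  assumes "prime CHAR('a)" and "p = CHAR('a)"
  shows "theta p i (R_mult r s :: 'a::field \<times> 'a) = R_mult (theta p i r) (theta p i s)"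
  by (simp add: theta_eq_Theta R_mult_def Theta_add[OF assms] Theta_mult)

lemma theta_R_zero: "0 < p \<Longrightarrow> theta p i R_zero = R_zero"
  by (simp add: theta_eq_Theta R_zero_def Theta_zero)

lemma theta_R_u: "0 < p \<Longrightarrow> theta p i R_u = R_u"
  by (simp add: theta_def R_u_def)

lemma theta_R_sum:
  assumes "prime CHAR('a)" and "p = CHAR('a)"
  shows "theta p i (R_sum (rs :: ('a::field \<times> 'a) list)) = R_sum (map (theta p i) rs)"
  using assms by (induction rs) (simp_all add: R_sum_def theta_R_zero theta_R_add prime_gt_0_nat)

lemma inj_theta:
  assumes "prime CHAR('a)" and "p = CHAR('a)"
  shows "inj (theta p i :: 'a::field \<times> 'a \<Rightarrow> 'a \<times> 'a)"
  using injD[OF inj_Theta[OF assms, of i]] by (auto intro!: injI simp: theta_eq_Theta prod_eq_iff)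

lemma length_cshift [simp]: "length (cshift xs) = length xs"
  by (cases xs rule: rev_exhaust) (auto simp: cshift_def)

lemma map_cshift: "map f (cshift xs) = cshift (map f xs)"
  by (cases xs rule: rev_exhaust) (auto simp: cshift_def)

lemma zip_cshift:
  assumes "length xs = length ys"
  shows "zip (cshift xs) (cshift ys) = cshift (zip xs ys)"
proof (cases xs rule: rev_exhaust)
  case (snoc xs' x)
  with assms obtain ys' y where "ys = ys' @ [y]" and "length xs' = length ys'"
    by (cases ys rule: rev_exhaust) auto
  with snoc show ?thesis
    by (simp add: cshift_def)
qed (simp add: cshift_def)

lemma map2_cshift:
  "length xs = length ys \<Longrightarrow> map2 f (cshift xs) (cshift ys) = cshift (map2 f xs ys)"
  by (simp add: zip_cshift map_cshift)

lemma sum_list_cshift: "sum_list (cshift (xs :: 'a::comm_monoid_add list)) = sum_list xs"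
  by (cases xs rule: rev_exhaust) (auto simp: cshift_def add.commute)

lemma inj_cshift: "inj cshift"
proof (rule injI)
  fix xs ys :: "'a list"
  assume "cshift xs = cshift ys"
  then show "xs = ys"
    by (cases xs rule: rev_exhaust; cases ys rule: rev_exhaust) (auto simp: cshift_def)
qed

lemma R_sum_eq: "R_sum rs = (sum_list (map fst rs), sum_list (map snd rs))"
  by (induction rs) (auto simp: R_sum_def R_add_def R_zero_def)

lemma R_sum_cshift: "R_sum (cshift rs) = R_sum rs"
  by (simp add: R_sum_eq map_cshift sum_list_cshift)

lemma ambient_iff: "l \<in> ambient \<alpha> \<beta> \<longleftrightarrow> length (fst l) = \<alpha> \<and> length (snd l) = \<beta>"
  by (cases l) (simp add: ambient_def)

lemma sigma_in_ambient: "l \<in> ambient \<alpha> \<beta> \<Longrightarrow> sigma p i l \<in> ambient \<alpha> \<beta>"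
  by (simp add: ambient_iff sigma_def)

lemma inj_sigma:
  assumes "prime CHAR('a)" and "p = CHAR('a)"
  shows "inj (sigma p i :: 'a::field word \<Rightarrow> 'a word)"
proof (rule injI)
  fix c d :: "'a word"
  assume "sigma p i c = sigma p i d"
  then have "map (Theta p i) (cshift (fst c)) = map (Theta p i) (cshift (fst d))"
    and "map (theta p i) (cshift (snd c)) = map (theta p i) (cshift (snd d))"
    by (auto simp: sigma_def)
  then have "cshift (fst c) = cshift (fst d)" and "cshift (snd c) = cshift (snd d)"
    using inj_Theta[OF assms] inj_theta[OF assms] by (auto dest: map_injective)
  then have "fst c = fst d" and "snd c = snd d"
    using injD[OF inj_cshift] by blast+
  then show "c = d"
    by (simp add: prod_eq_iff)
qed

lemma inner_sigma:
  assumes char: "prime CHAR('a)" "p = CHAR('a)"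
    and "l \<in> ambient \<alpha> \<beta>" and "l' \<in> ambient \<alpha> \<beta>"
  shows "inner (sigma p i l) (sigma p i l' :: 'a::field word) = theta p i (inner l l')"
proof -
  obtain x y x' y' where l: "l = (x, y)" and l': "l' = (x', y')"
    by fastforce
  have "0 < p"
    using char prime_gt_0_nat by simp
  then have theta_embed: "theta p i (s, 0) = (Theta p i s, 0)" for s :: 'a
    by (simp add: theta_eq_Theta Theta_zero)
  have lengths: "length x = length x'" "length y = length y'"
    using assms(3,4) by (simp_all add: l l' ambient_def)
  have Theta_map2: "map2 (*) (map (Theta p i) xs) (map (Theta p i) ys) = map (Theta p i) (map2 (*) xs ys)"
    for xs ys :: "'a list"
    by (simp add: zip_map_map Theta_mult case_prod_beta)
  have theta_map2: "map2 R_mult (map (theta p i) xs) (map (theta p i) ys) = map (theta p i) (map2 R_mult xs ys)"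
    for xs ys :: "('a \<times> 'a) list"
    by (simp add: zip_map_map theta_R_mult[OF char] case_prod_beta)
  have "inner (sigma p i l) (sigma p i l')
      = R_add (R_mult R_u (sum_list (map (Theta p i) (cshift (map2 (*) x x'))), 0))
          (R_sum (map (theta p i) (cshift (map2 R_mult y y'))))"
    by (simp only: l l' inner_def sigma_def fst_conv snd_conv Theta_map2 theta_map2 map2_cshift lengths)
  also have "\<dots> = R_add (R_mult R_u (Theta p i (sum_list (map2 (*) x x')), 0))
          (theta p i (R_sum (map2 R_mult y y')))"
    by (simp add: map_cshift sum_list_cshift R_sum_cshift Theta_sum_list[OF char] theta_R_sum[OF char])
  also have "\<dots> = theta p i (inner l l')"
    using \<open>0 < p\<close>
    by (simp add: l l' inner_def theta_R_add[OF char] theta_R_mult[OF char] theta_R_u theta_embed)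
  finally show ?thesis .
qed

lemma inner_eq_sums:
  assumes "length x' = length x" and "length y' = length y"
  shows "inner (x, y) (x', y') =
    ((\<Sum>j<length y. fst (R_mult (y ! j) (y' ! j))),
     (\<Sum>k<length x. x ! k * x' ! k) + (\<Sum>j<length y. snd (R_mult (y ! j) (y' ! j))))"
  using assms by (simp add: inner_def R_sum_eq R_add_def R_u_def R_mult_def sum_list_sum_nth atLeast0LessThan)

text \<open>The scalar action is self-adjoint but not linear for the inner product: for
  \<open>s = a + u b\<close> it multiplies the \<open>\<F>\<^sub>q\<close>-part by \<open>\<eta> s = a\<close>, while \<open>u s = u (a + b)\<close>.\<close>
lemma inner_smult_word_adjoint:
  assumes "l \<in> ambient \<alpha> \<beta>" and "l' \<in> ambient \<alpha> \<beta>"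
  shows "inner (smult_word s l) l' = inner l (smult_word s l')"
  using assms
  by (cases l; cases l')
    (simp add: ambient_def inner_eq_sums smult_word_def sum_distrib_left R_mult_def eta_def algebra_simps)

lemma inner_word_add_right:
  assumes "l \<in> ambient \<alpha> \<beta>" and "c \<in> ambient \<alpha> \<beta>" and "d \<in> ambient \<alpha> \<beta>"
  shows "inner l (word_add c d) = R_add (inner l c) (inner l d)"
  using assms
  by (cases l; cases c; cases d)
    (simp add: ambient_def inner_eq_sums word_add_def R_add_def R_mult_def sum.distrib algebra_simps)

lemma inner_word_zero_right:
  "l \<in> ambient \<alpha> \<beta> \<Longrightarrow> inner l (word_zero \<alpha> \<beta>) = R_zero"
  by (cases l) (simp add: ambient_def inner_eq_sums word_zero_def R_zero_def R_mult_def)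

lemma dual_is_R_submodule:
  assumes C_ambient: "C \<subseteq> ambient \<alpha> \<beta>"
    and smult_closed: "\<And>s c. c \<in> C \<Longrightarrow> smult_word s c \<in> C"
  shows "is_R_submodule \<alpha> \<beta> (dual \<alpha> \<beta> C)"
proof -
  have "word_zero \<alpha> \<beta> \<in> ambient \<alpha> \<beta>"
    by (simp add: ambient_iff word_zero_def)
  with C_ambient have "word_zero \<alpha> \<beta> \<in> dual \<alpha> \<beta> C"
    by (auto simp: dual_def inner_word_zero_right)
  moreover have "word_add c d \<in> dual \<alpha> \<beta> C" if c: "c \<in> dual \<alpha> \<beta> C" and d: "d \<in> dual \<alpha> \<beta> C" for c d
  proof -
    have "word_add c d \<in> ambient \<alpha> \<beta>"
      using c d by (simp add: dual_def ambient_iff word_add_def)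
    moreover have "inner l (word_add c d) = R_zero" if "l \<in> C" for l
      using c d subsetD[OF C_ambient that] that
      by (simp add: dual_def inner_word_add_right R_add_def R_zero_def)
    ultimately show ?thesis
      by (simp add: dual_def)
  qed
  moreover have "smult_word s c \<in> dual \<alpha> \<beta> C" if c: "c \<in> dual \<alpha> \<beta> C" for s c
  proof -
    have "smult_word s c \<in> ambient \<alpha> \<beta>"
      using c by (simp add: dual_def ambient_iff smult_word_def)
    moreover have "inner l (smult_word s c) = R_zero" if "l \<in> C" for l
      using c subsetD[OF C_ambient that] smult_closed[OF that]
      by (simp add: dual_def inner_smult_word_adjoint[symmetric])
    ultimately show ?thesis
      by (simp add: dual_def)
  qed
  ultimately show ?thesis
    by (auto simp: is_R_submodule_def dual_def)
qed

lemma sigma_in_dual: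
  assumes char: "prime CHAR('a)" "p = CHAR('a)"
    and "C \<subseteq> ambient \<alpha> \<beta>" and "sigma p i ` C = C"
    and "c \<in> dual \<alpha> \<beta> (C :: 'a::field word set)"
  shows "sigma p i c \<in> dual \<alpha> \<beta> C"
proof -
  have "inner l (sigma p i c) = R_zero" if "l \<in> C" for l
  proof -
    from \<open>l \<in> C\<close> assms(4) obtain d where "d \<in> C" and "l = sigma p i d"
      by blast
    moreover have "inner d c = R_zero"
      using \<open>d \<in> C\<close> assms(5) by (simp add: dual_def)
    ultimately show ?thesis
      using inner_sigma[OF char subsetD[OF assms(3) \<open>d \<in> C\<close>]] assms(5) char
      by (simp add: dual_def theta_R_zero prime_gt_0_nat)
  qed
  with assms(5) show ?thesis
    by (auto simp: dual_def sigma_in_ambient)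
qed

lemma finite_ambient: "finite (ambient \<alpha> \<beta> :: 'a::{finite,field} word set)"
proof -
  have "ambient \<alpha> \<beta> = {xs :: 'a list. length xs = \<alpha>} \<times> {ys :: ('a \<times> 'a) list. length ys = \<beta>}"
    by (auto simp: ambient_def)
  then show ?thesis
    using finite_lists_length_eq[of "UNIV :: 'a set" \<alpha>]
      finite_lists_length_eq[of "UNIV :: ('a \<times> 'a) set" \<beta>]
    by simp
qed

theorem theorem3:
  fixes p m i \<alpha> \<beta> :: nat and C :: "('a::{finite,field}) word set"
  assumes "prime p" and "card (UNIV :: 'a set) = p ^ m"
    and "0 < \<alpha>" and "0 < \<beta>"
    and "is_skew_cyclic p i \<alpha> \<beta> C"
    and "theta_order p i TYPE('a) dvd \<beta>"
  shows "is_skew_cyclic p i \<alpha> \<beta> (dual \<alpha> \<beta> C)"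
proof -
  have char: "prime CHAR('a)" "p = CHAR('a)"
    using CHAR_eq_prime_if_card_eq_power[OF assms(1,2)] assms(1) by simp_all
  have C_ambient: "C \<subseteq> ambient \<alpha> \<beta>"
    and smult_closed: "\<And>s c. c \<in> C \<Longrightarrow> smult_word s c \<in> C"
    and sigma_closed: "sigma p i ` C \<subseteq> C"
    using assms(5) by (auto simp: is_skew_cyclic_def is_R_submodule_def)
  have "finite C"
    using C_ambient finite_ambient finite_subset by blast
  then have "sigma p i ` C = C"
    using endo_inj_surj sigma_closed inj_on_subset[OF inj_sigma[OF char] subset_UNIV] by blast
  then show ?thesis
    using dual_is_R_submodule[OF C_ambient smult_closed] sigma_in_dual[OF char C_ambient]
    by (simp add: is_skew_cyclic_def)
qed

end
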